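(* Let $F$ be a positive integer and $S\in\mathrm{Sat}(F)$. Then for every integer $g$ with $\mathrm{g}(S)\le g\le F$ there exists $T\in\mathrm{Sat}(F)$ with $\mathrm{g}(T)=g$.
   Context: A numerical semigroup is a subset $S\subseteq\mathbb{N}$ closed under addition, containing $0$, with $\mathbb{N}\setminus S$ finite. Its genus $\mathrm{g}(S)$ is the cardinality of $\mathbb{N}\setminus S$, and its Frobenius number $\mathrm{F}(S)$ is the largest integer not in $S$. For $A\subseteq\mathbb{N}$ and $a\in A$, let $\mathrm{d}_A(a)=\gcd\{x\in A\mid x\le a\}$. A numerical semigroup $S$ is saturated if $s+\mathrm{d}_S(s)\in S$ for all $s\in S\setminus\{0\}$. For a positive integer $F$, $\mathrm{Sat}(F)$ denotes the set of all saturated numerical semigroups $S$ with $\mathrm{F}(S)=F$. *)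

theory Defs
  imports Main
begin

definition numerical_semigroup :: "nat set \<Rightarrow> bool" where
  "numerical_semigroup S \<longleftrightarrow> 0 \<in> S \<and> (\<forall>x\<in>S. \<forall>y\<in>S. x + y \<in> S) \<and> finite (UNIV - S)"

definition genus :: "nat set \<Rightarrow> nat" where
  "genus S = card (UNIV - S)"

(* Frobenius number: the largest natural number not in S (only used when UNIV - S is nonempty) *)
definition frobenius :: "nat set \<Rightarrow> nat" where
  "frobenius S = Max (UNIV - S)"

definition dA :: "nat set \<Rightarrow> nat \<Rightarrow> nat" where
  "dA A a = Gcd {x \<in> A. x \<le> a}"

definition saturated :: "nat set \<Rightarrow> bool" where
  "saturated S \<longleftrightarrow> numerical_semigroup S \<and> (\<forall>s\<in>S - {0}. s + dA S s \<in> S)"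

definition Sat :: "nat \<Rightarrow> nat set set" where
  "Sat F = {S. saturated S \<and> UNIV - S \<noteq> {} \<and> frobenius S = F}"

end

theory Submission
  imports Defs
begin

text \<open>If \<open>S \<in> Sat(F)\<close>, let \<open>s\<close> be the largest element of \<open>S\<close> below \<open>F\<close> and \<open>d = d\<^sub>S(s)\<close>.
  Saturation puts \<open>s + d\<close> into \<open>S\<close>, so \<open>d\<close> cannot divide \<open>F\<close>, while \<open>d\<close> divides every element
  of \<open>S\<close> below \<open>F\<close>. For every \<open>c\<close> the set \<open>T\<^sub>c\<close> consisting of \<open>0\<close>, the multiples of \<open>d\<close> in
  \<open>[c, F)\<close> and all integers above \<open>F\<close> is again in \<open>Sat(F)\<close>. Its genus is at most \<open>g(S)\<close> for
  \<open>c = 0\<close>, equals \<open>F\<close> for \<open>c \<ge> F\<close>, and grows by at most one when \<open>c\<close> is increased by one;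
  hence every value in between is attained.\<close>

lemma frobenius_eqI:
  assumes "finite (UNIV - S)" and "F \<notin> S" and "\<And>x. F < x \<Longrightarrow> x \<in> S"
  shows "frobenius S = F"
  unfolding frobenius_def
proof (rule antisym)
  show "Max (UNIV - S) \<le> F"
    using assms by (subst Max_le_iff) (auto simp: not_less[symmetric])
  show "F \<le> Max (UNIV - S)"
    using assms by (intro Max_ge) auto
qed

lemma
  assumes "S \<in> Sat F"
  shows Sat_finite_gaps: "finite (UNIV - S)"
    and Sat_frobenius_notin: "F \<notin> S"
proof -
  have nonempty: "UNIV - S \<noteq> {}" and max: "Max (UNIV - S) = F"
    using assms by (auto simp: Sat_def frobenius_def)
  show fin: "finite (UNIV - S)"
    using assms by (simp add: Sat_def saturated_def numerical_semigroup_def)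
  show "F \<notin> S"
    using Max_in[OF fin nonempty] max by auto
qed

lemma Sat_common_divisor_below_frobenius:
  assumes "F > 0" and "S \<in> Sat F"
  obtains d where "\<not> d dvd F" and "\<And>x. x \<in> S \<Longrightarrow> 0 < x \<Longrightarrow> x < F \<Longrightarrow> d dvd x"
proof (cases "S \<inter> {0<..<F} = {}")
  case True
  then show ?thesis
    using assms(1) by (intro that[of 0]) auto
next
  case False
  define s where "s = Max (S \<inter> {0<..<F})"
  have s: "s \<in> S" "0 < s" "s < F"
    using Max_in[OF _ False] by (auto simp: s_def)
  have s_max: "x \<le> s" if "x \<in> S" "0 < x" "x < F" for x
    using that by (auto simp: s_def intro: Max_ge)
  define d where "d = dA S s"
  have d_dvd: "d dvd x" if "x \<in> S" "x \<le> s" for x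
    unfolding d_def dA_def by (rule Gcd_dvd) (use that in auto)
  have sd: "s + d \<in> S"
    using assms(2) s by (auto simp: Sat_def saturated_def d_def)
  have "\<not> d dvd F"
  proof
    assume "d dvd F"
    moreover have "d dvd s"
      using d_dvd s by auto
    ultimately have "d dvd F - s"
      by (rule dvd_diff_nat)
    moreover have "d > 0"
      using \<open>d dvd F\<close> assms(1) by (auto intro: gr0I)
    ultimately have "s + d \<le> F"
      using s(3) by (auto dest: dvd_imp_le)
    moreover have "s + d \<noteq> F"
      using sd Sat_frobenius_notin[OF assms(2)] by auto
    ultimately show False
      using s_max[OF sd] \<open>d > 0\<close> by auto
  qed
  then show ?thesis
    using that d_dvd s_max by auto
qed

definition truncated_multiples :: "nat \<Rightarrow> nat \<Rightarrow> nat \<Rightarrow> nat set" where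
  "truncated_multiples F d c = insert 0 {x. c \<le> x \<and> 0 < x \<and> x < F \<and> d dvd x} \<union> {F<..}"

lemma truncated_multiples_gaps:
  "UNIV - truncated_multiples F d c = {1..F} - {x. c \<le> x \<and> x < F \<and> d dvd x}"
  by (auto simp: truncated_multiples_def)

lemma truncated_multiples_in_Sat:
  assumes "F > 0" and "\<not> d dvd F"
  shows "truncated_multiples F d c \<in> Sat F"
proof -
  let ?T = "truncated_multiples F d c"
  have multiple_in: "y \<in> ?T" if "d dvd y" "c \<le> y" "0 < y" for y
    using that assms(2) by (cases "y = F") (auto simp: truncated_multiples_def)
  have fin: "finite (UNIV - ?T)"
    by (simp add: truncated_multiples_gaps)
  have closed: "x + y \<in> ?T" if "x \<in> ?T" "y \<in> ?T" for x y
    using that multiple_in[of "x + y"] by (auto simp: truncated_multiples_def)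
  have saturation: "s + dA ?T s \<in> ?T" if "s \<in> ?T - {0}" for s
  proof (cases "F < s")
    case True
    then show ?thesis
      by (auto simp: truncated_multiples_def)
  next
    case False
    then have s: "d dvd s" "c \<le> s" "0 < s"
      using that by (auto simp: truncated_multiples_def)
    have "d dvd dA ?T s"
      unfolding dA_def
      by (rule Gcd_greatest) (use False in \<open>auto simp: truncated_multiples_def\<close>)
    then show ?thesis
      using s by (intro multiple_in) auto
  qed
  have "F \<notin> ?T"
    using assms(1) by (simp add: truncated_multiples_def)
  moreover have "frobenius ?T = F"
    using fin \<open>F \<notin> ?T\<close> by (rule frobenius_eqI) (simp add: truncated_multiples_def)
  moreover have "saturated ?T"
    using fin closed saturation
    by (auto simp: saturated_def numerical_semigroup_def truncated_multiples_def)
  ultimately show ?thesis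
    by (auto simp: Sat_def)
qed

lemma genus_truncated_multiples_Suc:
  "genus (truncated_multiples F d c) \<le> genus (truncated_multiples F d (Suc c))"
  "genus (truncated_multiples F d (Suc c)) \<le> genus (truncated_multiples F d c) + 1"
proof -
  let ?G = "\<lambda>c. UNIV - truncated_multiples F d c"
  have gaps_Suc: "?G (Suc c) = ?G c \<union> ({c} \<inter> {x. 0 < x \<and> x < F \<and> d dvd x})"
    unfolding truncated_multiples_gaps by auto
  have fin: "finite (?G c)"
    by (simp add: truncated_multiples_gaps)
  show "genus (truncated_multiples F d c) \<le> genus (truncated_multiples F d (Suc c))"
    unfolding genus_def gaps_Suc using fin by (intro card_mono) auto
  have "card (?G (Suc c)) \<le> card (?G c) + card ({c} \<inter> {x. 0 < x \<and> x < F \<and> d dvd x})"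
    unfolding gaps_Suc by (rule card_Un_le)
  also have "\<dots> \<le> card (?G c) + 1"
    using card_mono[of "{c}" "{c} \<inter> {x. 0 < x \<and> x < F \<and> d dvd x}"] by auto
  finally show "genus (truncated_multiples F d (Suc c)) \<le> genus (truncated_multiples F d c) + 1"
    by (simp add: genus_def)
qed

lemma genus_truncated_multiples_above_frobenius:
  assumes "F \<le> c"
  shows "genus (truncated_multiples F d c) = F"
proof -
  have "UNIV - truncated_multiples F d c = {1..F}"
    using assms unfolding truncated_multiples_gaps by auto
  then show ?thesis
    by (simp add: genus_def)
qed

lemma genus_truncated_multiples_0_le:
  assumes "finite (UNIV - S)" and "F \<notin> S"
    and "\<And>x. x \<in> S \<Longrightarrow> 0 < x \<Longrightarrow> x < F \<Longrightarrow> d dvd x"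
  shows "genus (truncated_multiples F d 0) \<le> genus S"
proof -
  have "UNIV - truncated_multiples F d 0 \<subseteq> UNIV - S"
  proof
    fix x
    assume "x \<in> UNIV - truncated_multiples F d 0"
    then have "0 < x" "x \<le> F" "x < F \<Longrightarrow> \<not> d dvd x"
      unfolding truncated_multiples_gaps by auto
    then show "x \<in> UNIV - S"
      using assms(2,3) by (cases "x = F") auto
  qed
  then show ?thesis
    unfolding genus_def by (rule card_mono[OF assms(1)])
qed

theorem lemma27:
  fixes F :: nat and S :: "nat set" and g :: nat
  assumes "F > 0" and "S \<in> Sat F" and "genus S \<le> g" and "g \<le> F"
  shows "\<exists>T \<in> Sat F. genus T = g"
proof -
  obtain d where d: "\<not> d dvd F" and dvd: "\<And>x. x \<in> S \<Longrightarrow> 0 < x \<Longrightarrow> x < F \<Longrightarrow> d dvd x"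
    using Sat_common_divisor_below_frobenius[OF assms(1,2)] by blast
  define f where "f c = int (genus (truncated_multiples F d c))" for c
  have "\<bar>f (Suc c) - f c\<bar> \<le> 1" for c
    using genus_truncated_multiples_Suc[of F d c] by (simp add: f_def)
  moreover have "f 0 \<le> int g"
    using genus_truncated_multiples_0_le[OF Sat_finite_gaps[OF assms(2)]
        Sat_frobenius_notin[OF assms(2)] dvd] assms(3)
    by (simp add: f_def)
  moreover have "int g \<le> f F"
    using genus_truncated_multiples_above_frobenius[of F F d] assms(4) by (simp add: f_def)
  ultimately obtain c where "f c = int g"
    using nat_intermed_int_val[of 0 F f "int g"] by auto
  then show ?thesis
    using truncated_multiples_in_Sat[OF assms(1) d, of c] by (auto simp: f_def)
qed

end
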